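(* For an integer $n\geq 2$, let $f=f_n:\mathbb{R}\to\mathbb{R}$ be the continuous function which equals $1$ on $[\frac{1}{n},1-\frac{1}{n}]$, equals $-1$ on $[-1+\frac{1}{n},-\frac{1}{n}]$, equals $0$ for $|t|\geq 1$, and is linear on each of the intervals $[-1,-1+\frac{1}{n}]$, $[-\frac{1}{n},\frac{1}{n}]$ and $[1-\frac{1}{n},1]$. Let $\phi_n(x)=c_n\left(1-\frac{x^2}{4}\right)^{n^2}$, with $c_n>0$ chosen so that $\int_{-2}^2\phi_n(x)\,dx=1$, and let $A(x,t)=|f(t+x)+f(t-x)-2f(t)|$. Then, as $n\to\infty$, $$\int_0^2\int_0^1 \frac{A(x,t)}{t}\,dt\;\phi_n(x)\,dx = o(\log n).$$ *)

theory Defs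
  imports "HOL-Analysis.Analysis" "HOL-Library.Landau_Symbols"
begin

definition fn :: "nat \<Rightarrow> real \<Rightarrow> real" where
  "fn n t =
     (if t \<le> -1 then 0
      else if t \<le> -1 + 1 / real n then - real n * (t + 1)
      else if t \<le> - 1 / real n then -1
      else if t \<le> 1 / real n then real n * t
      else if t \<le> 1 - 1 / real n then 1
      else if t \<le> 1 then real n * (1 - t)
      else 0)"

definition cn :: "nat \<Rightarrow> real" where
  "cn n = 1 / integral {-2..2} (\<lambda>x. (1 - x\<^sup>2 / 4) ^ (n\<^sup>2))"

definition phin :: "nat \<Rightarrow> real \<Rightarrow> real" where
  "phin n x = cn n * (1 - x\<^sup>2 / 4) ^ (n\<^sup>2)"

definition An :: "nat \<Rightarrow> real \<Rightarrow> real \<Rightarrow> real" where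
  "An n x t = \<bar>fn n (t + x) + fn n (t - x) - 2 * fn n t\<bar>"

definition In :: "nat \<Rightarrow> real" where
  "In n = integral {0..2} (\<lambda>x. integral {0..1} (\<lambda>t. An n x t / t) * phin n x)"

end

theory Submission
  imports Defs "HOL-Real_Asymp.Real_Asymp"
begin

text \<open>
  In fact \<open>I\<^sub>n\<close> stays bounded. The function \<open>f\<^sub>n\<close> is odd, \<open>n\<close>-Lipschitz and bounded by \<open>1\<close>,
  so \<open>A(x,t) \<le> min (4 n t) 4\<close>; moreover \<open>A(x,t) = 0\<close> for \<open>1/n + x \<le> t < 1/2\<close>, where all three
  arguments lie on the plateau of \<open>f\<^sub>n\<close>. Hence the inner integral is at most \<open>12 + 4 n x\<close>.
  The weight \<open>\<phi>\<^sub>n\<close> lives at scale \<open>1/n\<close>: Bernoulli's inequality gives \<open>c\<^sub>n \<le> 4n/3\<close>, and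
  \<open>\<integral>\<^sub>0\<^sup>2 x (1 - x\<^sup>2/4)\<^sup>N dx = 2/(N+1)\<close> with \<open>N = n\<^sup>2\<close>, so \<open>\<integral> x \<phi>\<^sub>n = O(1/n)\<close> and \<open>I\<^sub>n \<le> 12 + 32/3\<close>.
\<close>

text \<open>\<open>integral\<close> is \<open>0\<close> on non-integrable functions, so bounds stated without integrability
  hypotheses suffice.\<close>

lemma integral_nonneg_unconditional:
  fixes f :: "'n::euclidean_space \<Rightarrow> real"
  assumes "\<And>x. x \<in> S \<Longrightarrow> 0 \<le> f x"
  shows "0 \<le> integral S f"
  using assms integral_nonneg not_integrable_integral by (metis order_refl)

lemma integral_le_nonneg_majorant:
  fixes f :: "'n::euclidean_space \<Rightarrow> real"
  assumes "(g has_integral B) S" "\<And>x. x \<in> S \<Longrightarrow> f x \<le> g x" "0 \<le> B"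
  shows "integral S f \<le> B"
proof (cases "f integrable_on S")
  case True
  then show ?thesis using assms(1,2) has_integral_le by blast
qed (simp add: not_integrable_integral assms(3))

lemma integral_le_step_function:
  fixes f :: "real \<Rightarrow> real"
  assumes "a \<le> c" "c \<le> b" "0 \<le> A" "0 \<le> B"
    and "\<And>t. t \<in> {a..c} \<Longrightarrow> f t \<le> A" "\<And>t. t \<in> {c..b} \<Longrightarrow> f t \<le> B"
  shows "integral {a..b} f \<le> A * (c - a) + B * (b - c)"
proof (cases "f integrable_on {a..b}")
  case True
  have "integral {a..b} f = integral {a..c} f + integral {c..b} f"
    using Henstock_Kurzweil_Integration.integral_combine[OF assms(1,2) True] by simp
  also have "\<dots> \<le> integral {a..c} (\<lambda>_. A) + integral {c..b} (\<lambda>_. B)"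
    using True assms
    by (intro add_mono integral_le integrable_const_ivl integrable_subinterval_real[OF True]) auto
  finally show ?thesis using assms(1,2) by (simp add: mult.commute)
qed (use assms in \<open>simp add: not_integrable_integral\<close>)

text \<open>Rescaling by \<open>n\<close> makes all case distinctions of \<open>fn\<close> linear, see \<open>fn_eq_ramp\<close>.\<close>

definition ramp :: "real \<Rightarrow> real \<Rightarrow> real" where
  "ramp N u = (if u \<le> -N then 0 else if u \<le> -N + 1 then -u - N else if u \<le> -1 then -1
     else if u \<le> 1 then u else if u \<le> N - 1 then 1 else if u \<le> N then N - u else 0)"

lemma ramp_lipschitz: "N \<ge> 2 \<Longrightarrow> \<bar>ramp N u - ramp N v\<bar> \<le> \<bar>u - v\<bar>"
  unfolding ramp_def by (auto split: if_splits)

lemma ramp_minus: "N \<ge> 2 \<Longrightarrow> ramp N (-u) = - ramp N u"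
  unfolding ramp_def by (auto split: if_splits)

lemma abs_ramp_le_1: "N \<ge> 2 \<Longrightarrow> \<bar>ramp N u\<bar> \<le> 1"
  unfolding ramp_def by (auto split: if_splits)

lemma fn_eq_ramp:
  assumes "n \<ge> 2"
  shows "fn n t = ramp (real n) (real n * t)"
proof -
  have n: "real n > 0" using assms by simp
  have "fn n (u / real n) = ramp (real n) u" for u
    using n unfolding fn_def ramp_def by (simp add: field_simps)
  from this[of "real n * t"] show ?thesis using n by simp
qed

lemma fn_lipschitz:
  assumes "n \<ge> 2"
  shows "\<bar>fn n a - fn n b\<bar> \<le> real n * \<bar>a - b\<bar>"
  using ramp_lipschitz[of "real n" "real n * a" "real n * b"] assms
  by (simp add: fn_eq_ramp abs_mult right_diff_distrib[symmetric])

lemma fn_minus: "n \<ge> 2 \<Longrightarrow> fn n (-t) = - fn n t"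
  using ramp_minus[of "real n" "real n * t"] by (simp add: fn_eq_ramp)

lemma abs_fn_le_1: "n \<ge> 2 \<Longrightarrow> \<bar>fn n t\<bar> \<le> 1"
  using abs_ramp_le_1[of "real n" "real n * t"] by (simp add: fn_eq_ramp)

lemma fn_eq_1:
  assumes "n \<ge> 2" "1 / real n \<le> t" "t \<le> 1 - 1 / real n"
  shows "fn n t = 1"
proof -
  have "real n > 0" "0 < 1 / real n" using assms(1) by simp_all
  moreover have "t > 0" using assms(2) calculation(2) by linarith
  ultimately show ?thesis using assms(2,3) unfolding fn_def by (auto simp: field_simps)
qed

lemma abs_add_minus_twice_le: "\<bar>(a::real) + b - 2 * c\<bar> \<le> \<bar>a\<bar> + \<bar>b\<bar> + 2 * \<bar>c\<bar>"
  by linarith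

lemma An_le_linear:
  assumes n: "n \<ge> 2" and t: "0 \<le> t"
  shows "An n x t \<le> 4 * real n * t"
proof -
  have "An n x t = \<bar>(fn n (t + x) - fn n x) + (fn n (t - x) - fn n (-x)) - 2 * (fn n t - fn n 0)\<bar>"
    using fn_minus[OF n, of x] fn_minus[OF n, of 0] by (simp add: An_def algebra_simps)
  also have "\<dots> \<le> \<bar>fn n (t + x) - fn n x\<bar> + \<bar>fn n (t - x) - fn n (-x)\<bar> + 2 * \<bar>fn n t - fn n 0\<bar>"
    by (rule abs_add_minus_twice_le)
  also have "\<dots> \<le> real n * t + real n * t + 2 * (real n * t)"
    using fn_lipschitz[OF n, of "t + x" x] fn_lipschitz[OF n, of "t - x" "-x"]
      fn_lipschitz[OF n, of t 0] t
    by (intro add_mono mult_left_mono) auto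
  finally show ?thesis by (simp add: mult_ac)
qed

lemma An_le_4: "n \<ge> 2 \<Longrightarrow> An n x t \<le> 4"
  unfolding An_def using abs_fn_le_1[of n "t + x"] abs_fn_le_1[of n "t - x"] abs_fn_le_1[of n t]
  by linarith

lemma An_eq_0:
  assumes "n \<ge> 2" "0 \<le> x" "1 / real n + x \<le> t" "t < 1 / 2"
  shows "An n x t = 0"
  using assms by (simp add: An_def fn_eq_1)

lemma integral_An_div_le:
  assumes n: "n \<ge> 2" and x: "0 \<le> x"
  shows "integral {0..1} (\<lambda>t. An n x t / t) \<le> 12 + 4 * real n * x"
proof -
  define c where "c = min 1 (1 / real n + x)"
  have c: "0 \<le> c" "c \<le> 1" using x by (auto simp: c_def)
  have small: "An n x t / t \<le> 4 * real n" if "t \<in> {0..c}" for t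
    using that An_le_linear[OF n, of t x] by (cases "t = 0") (auto simp: divide_le_eq mult_ac)
  have large: "An n x t / t \<le> 8" if "t \<in> {c..1}" for t
  proof (cases "t < 1 / 2")
    case True
    then have "1 / real n + x \<le> t" using that by (auto simp: c_def)
    then show ?thesis using An_eq_0[OF n x _ True] by simp
  qed (use An_le_4[OF n, of x t] in \<open>simp add: divide_le_eq\<close>)
  have "integral {0..1} (\<lambda>t. An n x t / t) \<le> 4 * real n * (c - 0) + 8 * (1 - c)"
    by (rule integral_le_step_function[OF c]) (use small large in auto)
  also have "\<dots> \<le> 4 * real n * (1 / real n + x) + 8"
    using c by (intro add_mono mult_left_mono) (auto simp: c_def)
  also have "\<dots> = 12 + 4 * real n * x" using n by (simp add: algebra_simps)
  finally show ?thesis .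
qed

lemma bump_nonneg:
  assumes "x \<in> {-2..2}"
  shows "0 \<le> (1 - (x::real)\<^sup>2 / 4) ^ N"
proof -
  have "x\<^sup>2 \<le> 2\<^sup>2" using assms abs_le_square_iff[of x 2] by auto
  then show ?thesis by simp
qed

lemma bump_integrable: "(\<lambda>x::real. (1 - x\<^sup>2 / 4) ^ N) integrable_on {a..b}"
  by (intro integrable_continuous_interval continuous_intros) auto

lemma integral_bump_ge:
  assumes n: "n \<ge> 2"
  shows "3 / (4 * real n) \<le> integral {-2..2} (\<lambda>x::real. (1 - x\<^sup>2 / 4) ^ (n\<^sup>2))"
proof -
  have "3 / (4 * real n) = integral {0..1 / real n} (\<lambda>_. 3 / 4 :: real)"
    by simp
  also have "\<dots> \<le> integral {0..1 / real n} (\<lambda>x::real. (1 - x\<^sup>2 / 4) ^ (n\<^sup>2))"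
  proof (rule integral_le[OF _ bump_integrable])
    fix x :: real assume x: "x \<in> {0..1 / real n}"
    have "real n * x \<le> 1" using x n by (simp add: le_divide_eq mult.commute)
    then have nx: "(real n * x)\<^sup>2 \<le> 1" using x by (simp add: power_le_one)
    have "x \<le> 1" using x n by (auto simp: divide_le_eq intro: order_trans)
    then have "x\<^sup>2 \<le> 1" using x by (simp add: power_le_one)
    then have "-1 \<le> - x\<^sup>2 / 4" by simp
    from Bernoulli_inequality[OF this, of "n\<^sup>2"]
    show "3 / 4 \<le> (1 - x\<^sup>2 / 4) ^ (n\<^sup>2)"
      using nx by (simp add: power_mult_distrib)
  qed auto
  also have "\<dots> \<le> integral {-2..2} (\<lambda>x::real. (1 - x\<^sup>2 / 4) ^ (n\<^sup>2))"
    using n by (intro integral_subset_le bump_integrable ballI bump_nonneg)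
      (auto simp: divide_le_eq)
  finally show ?thesis .
qed

lemma has_integral_x_bump:
  "((\<lambda>x::real. x * (1 - x\<^sup>2 / 4) ^ N) has_integral 2 / (real N + 1)) {0..2}"
proof -
  define G where "G x = - (2 / (real N + 1)) * (1 - x\<^sup>2 / 4) ^ (N + 1)" for x :: real
  have "((\<lambda>x::real. x * (1 - x\<^sup>2 / 4) ^ N) has_integral G 2 - G 0) {0..2}"
  proof (rule fundamental_theorem_of_calculus)
    fix x :: real
    have "(G has_real_derivative x * (1 - x\<^sup>2 / 4) ^ N) (at x within {0..2})"
      unfolding G_def by (rule derivative_eq_intros refl | simp)+ (simp add: add.commute)
    then show "(G has_vector_derivative x * (1 - x\<^sup>2 / 4) ^ N) (at x within {0..2})"
      by (simp add: has_real_derivative_iff_has_vector_derivative)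
  qed simp
  then show ?thesis by (simp add: G_def)
qed

lemma cn_pos_le:
  assumes "n \<ge> 2"
  shows "0 < cn n" "cn n \<le> 4 * real n / 3"
proof -
  define P where "P = integral {-2..2} (\<lambda>x::real. (1 - x\<^sup>2 / 4) ^ (n\<^sup>2))"
  have lower: "3 / (4 * real n) \<le> P" and "0 < 3 / (4 * real n)"
    using assms integral_bump_ge[OF assms] by (simp_all add: P_def)
  then have "0 < P" by linarith
  then show "0 < cn n" by (simp add: cn_def flip: P_def)
  have "1 / P \<le> 1 / (3 / (4 * real n))"
    using \<open>0 < 3 / (4 * real n)\<close> \<open>0 < P\<close> by (intro divide_left_mono[OF lower]) auto
  then show "cn n \<le> 4 * real n / 3" by (simp add: cn_def flip: P_def)
qed

lemma phin_nonneg: "n \<ge> 2 \<Longrightarrow> x \<in> {-2..2} \<Longrightarrow> 0 \<le> phin n x"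
  unfolding phin_def using cn_pos_le(1) by (simp add: bump_nonneg less_imp_le)

lemma phin_integrable: "phin n integrable_on {a..b}"
  unfolding phin_def by (intro integrable_continuous_interval continuous_intros) auto

lemma has_integral_x_phin:
  "((\<lambda>x. x * phin n x) has_integral cn n * (2 / (real (n\<^sup>2) + 1))) {0..2}"
  using has_integral_mult_right[OF has_integral_x_bump, of "cn n" "n\<^sup>2"]
  by (simp add: phin_def mult.left_commute)

lemma integral_phin_le_1:
  assumes "n \<ge> 2"
  shows "integral {0..2} (phin n) \<le> 1"
proof -
  have "integral {0..2} (phin n) \<le> integral {-2..2} (phin n)"
    using assms by (intro integral_subset_le phin_integrable ballI phin_nonneg) auto
  also have "\<dots> = 1"
    using cn_pos_le(1)[OF assms] unfolding phin_def integral_mult_right by (simp add: cn_def)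
  finally show ?thesis .
qed

lemma In_nonneg: "n \<ge> 2 \<Longrightarrow> 0 \<le> In n"
  unfolding In_def
  by (intro integral_nonneg_unconditional mult_nonneg_nonneg divide_nonneg_nonneg phin_nonneg)
    (auto simp: An_def)

lemma In_le:
  assumes n: "n \<ge> 2"
  shows "In n \<le> 23"
proof -
  define B where "B = 12 * integral {0..2} (phin n) + 4 * real n * (cn n * (2 / (real (n\<^sup>2) + 1)))"
  have majorant: "((\<lambda>x. 12 * phin n x + 4 * real n * (x * phin n x)) has_integral B) {0..2}"
    unfolding B_def using phin_integrable
    by (intro has_integral_add has_integral_mult_right has_integral_x_phin) auto
  have dominated: "integral {0..1} (\<lambda>t. An n x t / t) * phin n x
      \<le> 12 * phin n x + 4 * real n * (x * phin n x)" if "x \<in> {0..2}" for x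
    using mult_right_mono[OF integral_An_div_le[OF n] phin_nonneg[OF n]] that
    by (simp add: algebra_simps)
  have "0 \<le> integral {0..2} (phin n)"
    using n by (intro integral_nonneg_unconditional phin_nonneg) auto
  then have "0 \<le> B" using cn_pos_le(1)[OF n] by (simp add: B_def)
  have "4 * real n * (cn n * (2 / (real (n\<^sup>2) + 1)))
      \<le> 4 * real n * (4 * real n / 3 * (2 / (real (n\<^sup>2) + 1)))"
    using cn_pos_le(2)[OF n] by (intro mult_left_mono mult_right_mono) auto
  also have "\<dots> = 32 / 3 * ((real n)\<^sup>2 / ((real n)\<^sup>2 + 1))"
    by (simp add: power2_eq_square)
  also have "\<dots> \<le> 32 / 3 * 1"
    using add_nonneg_pos[OF zero_le_power2[of "real n"] zero_less_one]
    by (intro mult_left_mono) (simp_all add: divide_le_eq_1)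
  finally have "B \<le> 23" using integral_phin_le_1[OF n] unfolding B_def by linarith
  moreover have "In n \<le> B"
    unfolding In_def by (rule integral_le_nonneg_majorant[OF majorant dominated \<open>0 \<le> B\<close>])
  ultimately show ?thesis by simp
qed

theorem lemma3:
  shows "(\<lambda>n. In n) \<in> o(\<lambda>n. ln (real n))"
proof -
  have "(\<lambda>n. In n) \<in> O(\<lambda>_. 1)"
  proof (rule bigoI[where c = 23])
    show "eventually (\<lambda>n. norm (In n) \<le> 23 * norm (1::real)) at_top"
      using eventually_ge_at_top[of 2] by eventually_elim (use In_nonneg In_le in auto)
  qed
  moreover have "(\<lambda>_. 1::real) \<in> o(\<lambda>n. ln (real n))" by real_asymp
  ultimately show ?thesis by (rule landau_o.big_small_trans)
qed

end
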